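(* Let $M\in\{0,1\}^{m\times n}$, $N=m+n$, $p=|M|/(mn)$, and let $A$ be the symmetrization of $M$ with eigenvalues $\lambda_1\geq\dots\geq\lambda_N$ and an orthonormal basis of corresponding eigenvectors $v_1,\dots,v_N$ chosen so that $v_i(j)=f(j)\,v_{N+1-i}(j)$ for all $i,j\in[N]$, where $f(j)=1$ for $j\in[m]$ and $f(j)=-1$ for $j\in[m+1,N]$. Let $a_1,\dots,a_N\geq 0$ and $X=\sum_{i=1}^N a_i v_iv_i^T$. Then $$\operatorname{disc}(X)\geq \sum_{i=1}^N a_i\lambda_i-\frac{pN}{2}\max_i(a_i+a_{N+1-i}).$$
   Context: $|M|$ is the number of $1$ entries of $M$. The symmetrization of $M$ is the symmetric matrix $A\in\mathbb{R}^{N\times N}$ with $A_{i,j+m}=A_{j+m,i}=M_{i,j}$ for $(i,j)\in[m]\times[n]$ and all other entries $0$ (the adjacency matrix of the bipartite graph of $M$); its spectrum is symmetric, $\lambda_i=-\lambda_{N+1-i}$, and eigenvectors can be chosen with the stated sign relation. $L\in\mathbb{R}^{N\times N}$ is the adjacency matrix of the complete bipartite graph with parts $[m]$ and $[m+1,N]$. For $X\in\mathbb{R}^{N\times N}$, $\operatorname{disc}(X)=\langle X,A\rangle-p\langle X,L\rangle$ with $\langle\cdot,\cdot\rangle$ the entrywise inner product. *)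

theory Defs
  imports Complex_Main
begin

text \<open>Conventions: indices are 0-based. The matrix M is m x n with rows in {0..<m} and
columns in {0..<n}; an N x N matrix (N = m+n) is a function nat => nat => real restricted
to {0..<N} x {0..<N}. Vertex set [m] becomes {0..<m}, [m+1,N] becomes {m..<m+n}.
Vectors v_1..v_N are v 0 .. v (N-1), with v i j the j-th coordinate; N+1-i becomes N-1-i.\<close>

definition zero_one_matrix :: "nat \<Rightarrow> nat \<Rightarrow> (nat \<Rightarrow> nat \<Rightarrow> real) \<Rightarrow> bool" where
  "zero_one_matrix m n M \<longleftrightarrow> (\<forall>i<m. \<forall>j<n. M i j = 0 \<or> M i j = 1)"

definition ones_count :: "nat \<Rightarrow> nat \<Rightarrow> (nat \<Rightarrow> nat \<Rightarrow> real) \<Rightarrow> nat" where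
  "ones_count m n M = card {(i, j). i < m \<and> j < n \<and> M i j = 1}"

definition density :: "nat \<Rightarrow> nat \<Rightarrow> (nat \<Rightarrow> nat \<Rightarrow> real) \<Rightarrow> real" where
  "density m n M = real (ones_count m n M) / (real m * real n)"

definition symmetrization :: "nat \<Rightarrow> nat \<Rightarrow> (nat \<Rightarrow> nat \<Rightarrow> real) \<Rightarrow> nat \<Rightarrow> nat \<Rightarrow> real" where
  "symmetrization m n M i k =
     (if i < m \<and> m \<le> k \<and> k < m + n then M i (k - m)
      else if k < m \<and> m \<le> i \<and> i < m + n then M k (i - m)
      else 0)"

definition complete_bip :: "nat \<Rightarrow> nat \<Rightarrow> nat \<Rightarrow> nat \<Rightarrow> real" where
  "complete_bip m n i k =
     (if (i < m \<and> m \<le> k \<and> k < m + n) \<or> (k < m \<and> m \<le> i \<and> i < m + n) then 1 else 0)"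

definition mat_inner :: "nat \<Rightarrow> (nat \<Rightarrow> nat \<Rightarrow> real) \<Rightarrow> (nat \<Rightarrow> nat \<Rightarrow> real) \<Rightarrow> real" where
  "mat_inner N X Y = (\<Sum>i<N. \<Sum>k<N. X i k * Y i k)"

definition disc :: "nat \<Rightarrow> nat \<Rightarrow> (nat \<Rightarrow> nat \<Rightarrow> real) \<Rightarrow> (nat \<Rightarrow> nat \<Rightarrow> real) \<Rightarrow> real" where
  "disc m n M X = mat_inner (m + n) X (symmetrization m n M)
                  - density m n M * mat_inner (m + n) X (complete_bip m n)"

definition sgnf :: "nat \<Rightarrow> nat \<Rightarrow> real" where
  "sgnf m j = (if j < m then 1 else -1)"

end

theory Submission
  imports Defs
begin

text \<open>Writing X as a nonnegative combination of the rank-one projections v_i v_i^T, its inner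
product with A is \<Sum> a_i \<lambda>_i, and its inner product with L is \<Sum> a_i 2 s_i t_i, where s_i and
t_i are the sums of the entries of v_i over the two sides of the bipartition. The sign relation
gives s_{N+1-i} = s_i and t_{N+1-i} = -t_i, so pairing i with N+1-i turns this into
\<Sum> (a_i - a_{N+1-i}) s_i t_i. As the a_i are nonnegative, |a_i - a_{N+1-i}| \<le> a_i + a_{N+1-i},
and 2|s_i t_i| \<le> s_i^2 + t_i^2, so this is at most (max_i (a_i + a_{N+1-i}))/2 \<Sum> (s_i^2 + t_i^2).
By Bessel's inequality applied to the indicator vectors of the two sides, \<Sum> s_i^2 \<le> m and
\<Sum> t_i^2 \<le> n.\<close>

definition quad_form :: "nat \<Rightarrow> (nat \<Rightarrow> nat \<Rightarrow> real) \<Rightarrow> (nat \<Rightarrow> real) \<Rightarrow> real" where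
  "quad_form N B x = (\<Sum>j<N. \<Sum>k<N. B j k * x j * x k)"

lemma mat_inner_sum_rank_one:
  "mat_inner N (\<lambda>j k. \<Sum>i\<in>I. a i * v i j * v i k) B = (\<Sum>i\<in>I. a i * quad_form N B (v i))"
proof -
  have "mat_inner N (\<lambda>j k. \<Sum>i\<in>I. a i * v i j * v i k) B
      = (\<Sum>j<N. \<Sum>k<N. \<Sum>i\<in>I. a i * (B j k * v i j * v i k))"
    unfolding mat_inner_def sum_distrib_right by (simp add: mult_ac)
  also have "\<dots> = (\<Sum>i\<in>I. \<Sum>j<N. \<Sum>k<N. a i * (B j k * v i j * v i k))"
    by (simp add: sum.swap[where A = I])
  finally show ?thesis
    by (simp add: quad_form_def sum_distrib_left)
qed

lemma quad_form_eigenvector: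
  assumes "\<And>j. j < N \<Longrightarrow> (\<Sum>k<N. B j k * x k) = \<mu> * x j"
    and "(\<Sum>j<N. x j * x j) = 1"
  shows "quad_form N B x = \<mu>"
proof -
  have "quad_form N B x = (\<Sum>j<N. x j * (\<Sum>k<N. B j k * x k))"
    unfolding quad_form_def by (simp add: sum_distrib_left mult_ac)
  also have "\<dots> = (\<Sum>j<N. x j * (\<mu> * x j))"
    by (simp add: assms(1))
  also have "\<dots> = \<mu>"
    using assms(2) by (simp add: sum_distrib_left[symmetric] mult_ac)
  finally show ?thesis .
qed

lemma quad_form_complete_bip:
  "quad_form (m + n) (complete_bip m n) x = 2 * (\<Sum>j<m. x j) * (\<Sum>j=m..<m+n. x j)"
proof -
  define u :: "nat \<Rightarrow> real" where "u j = of_bool (j < m)" for j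
  define w :: "nat \<Rightarrow> real" where "w j = of_bool (m \<le> j)" for j
  have "quad_form (m + n) (complete_bip m n) x
      = (\<Sum>j<m+n. \<Sum>k<m+n. (u j * w k + w j * u k) * x j * x k)"
    unfolding quad_form_def by (intro sum.cong refl) (auto simp: complete_bip_def u_def w_def)
  also have "\<dots> = (\<Sum>j<m+n. u j * x j) * (\<Sum>k<m+n. w k * x k)
      + (\<Sum>j<m+n. w j * x j) * (\<Sum>k<m+n. u k * x k)"
    unfolding sum_product distrib_right sum.distrib by (simp only: mult_ac)
  also have "\<dots> = 2 * (\<Sum>j<m. x j) * (\<Sum>j=m..<m+n. x j)"
  proof -
    have "{..<m+n} \<inter> {j. j < m} = {..<m}" "{..<m+n} \<inter> {j. m \<le> j} = {m..<m+n}"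
      by auto
    then show ?thesis
      by (simp add: u_def w_def)
  qed
  finally show ?thesis .
qed

lemma orthonormal_Bessel_inequality:
  fixes v :: "'i \<Rightarrow> 'j \<Rightarrow> real" and w :: "'j \<Rightarrow> real"
  assumes "finite I" "finite J"
    and orth: "\<And>i k. i \<in> I \<Longrightarrow> k \<in> I \<Longrightarrow> (\<Sum>j\<in>J. v i j * v k j) = (if i = k then 1 else 0)"
  shows "(\<Sum>i\<in>I. (\<Sum>j\<in>J. v i j * w j)\<^sup>2) \<le> (\<Sum>j\<in>J. (w j)\<^sup>2)"
proof -
  define c where "c i = (\<Sum>j\<in>J. v i j * w j)" for i
  have cross: "(\<Sum>j\<in>J. w j * (\<Sum>i\<in>I. c i * v i j)) = (\<Sum>i\<in>I. (c i)\<^sup>2)"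
    unfolding sum_distrib_left
    by (subst sum.swap) (simp add: c_def sum_distrib_left sum_distrib_right power2_eq_square mult_ac)
  have "(\<Sum>j\<in>J. (\<Sum>i\<in>I. c i * v i j)\<^sup>2) = (\<Sum>j\<in>J. \<Sum>i\<in>I. \<Sum>k\<in>I. c i * c k * (v i j * v k j))"
    by (simp only: power2_eq_square sum_product mult_ac)
  also have "\<dots> = (\<Sum>i\<in>I. \<Sum>k\<in>I. c i * c k * (\<Sum>j\<in>J. v i j * v k j))"
    unfolding sum_distrib_left by (subst sum.swap) (simp only: sum.swap[of _ _ J])
  also have "\<dots> = (\<Sum>i\<in>I. c i * c i)"
    using \<open>finite I\<close> by (simp add: orth of_bool_def[symmetric])
  finally have square: "(\<Sum>j\<in>J. (\<Sum>i\<in>I. c i * v i j)\<^sup>2) = (\<Sum>i\<in>I. (c i)\<^sup>2)"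
    by (simp add: power2_eq_square)
  have "0 \<le> (\<Sum>j\<in>J. (w j - (\<Sum>i\<in>I. c i * v i j))\<^sup>2)"
    by (simp add: sum_nonneg)
  also have "\<dots> = (\<Sum>j\<in>J. (w j)\<^sup>2) - 2 * (\<Sum>j\<in>J. w j * (\<Sum>i\<in>I. c i * v i j))
      + (\<Sum>j\<in>J. (\<Sum>i\<in>I. c i * v i j)\<^sup>2)"
    by (simp only: power2_diff sum.distrib sum_subtractf sum_distrib_left mult.assoc)
  finally have "0 \<le> (\<Sum>j\<in>J. (w j)\<^sup>2) - (\<Sum>i\<in>I. (c i)\<^sup>2)"
    unfolding cross square by simp
  then show ?thesis
    by (simp add: c_def)
qed

lemma orthonormal_sum_block_sq_le_card:
  fixes v :: "'i \<Rightarrow> 'j \<Rightarrow> real"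
  assumes "finite I" "finite J" "S \<subseteq> J"
    and "\<And>i k. i \<in> I \<Longrightarrow> k \<in> I \<Longrightarrow> (\<Sum>j\<in>J. v i j * v k j) = (if i = k then 1 else 0)"
  shows "(\<Sum>i\<in>I. (\<Sum>j\<in>S. v i j)\<^sup>2) \<le> card S"
proof -
  have restrict: "J \<inter> S = S"
    using assms(3) by auto
  have "(\<Sum>j\<in>J. v i j * of_bool (j \<in> S)) = (\<Sum>j\<in>S. v i j)" for i
    using assms(2) restrict by simp
  moreover have "(\<Sum>j\<in>J. (of_bool (j \<in> S) :: real)\<^sup>2) = (\<Sum>j\<in>J. of_bool (j \<in> S))"
    by (rule sum.cong) auto
  ultimately show ?thesis
    using orthonormal_Bessel_inequality[OF assms(1,2,4), of "\<lambda>j. of_bool (j \<in> S)"] assms(2) restrict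
    by simp
qed

lemma sum_reflected_products_le:
  fixes a s t :: "nat \<Rightarrow> real"
  assumes s_refl: "\<And>i. i < N \<Longrightarrow> s (N - 1 - i) = s i"
    and t_refl: "\<And>i. i < N \<Longrightarrow> t (N - 1 - i) = - t i"
    and a_nonneg: "\<And>i. i < N \<Longrightarrow> 0 \<le> a i"
    and a_bound: "\<And>i. i < N \<Longrightarrow> a i + a (N - 1 - i) \<le> K"
  shows "(\<Sum>i<N. a i * (2 * s i * t i)) \<le> K / 2 * (\<Sum>i<N. (s i)\<^sup>2 + (t i)\<^sup>2)"
proof -
  have "(\<Sum>i<N. a i * (s i * t i)) = (\<Sum>i<N. a (N - 1 - i) * (s (N - 1 - i) * t (N - 1 - i)))"
    by (rule sum.reindex_bij_witness[where i = "\<lambda>i. N - 1 - i" and j = "\<lambda>i. N - 1 - i"]) auto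
  also have "\<dots> = (\<Sum>i<N. - (a (N - 1 - i) * (s i * t i)))"
    by (rule sum.cong) (use s_refl t_refl in auto)
  finally have pair: "(\<Sum>i<N. a (N - 1 - i) * (s i * t i)) = - (\<Sum>i<N. a i * (s i * t i))"
    by (simp add: sum_negf)
  have "(\<Sum>i<N. a i * (2 * s i * t i)) = 2 * (\<Sum>i<N. a i * (s i * t i))"
    by (simp add: sum_distrib_left mult_ac)
  also have "\<dots> = (\<Sum>i<N. (a i - a (N - 1 - i)) * (s i * t i))"
    using pair by (simp add: left_diff_distrib sum_subtractf)
  also have "\<dots> \<le> (\<Sum>i<N. K / 2 * ((s i)\<^sup>2 + (t i)\<^sup>2))"
  proof (rule sum_mono)
    fix i assume "i \<in> {..<N}"
    then have diff_bound: "\<bar>a i - a (N - 1 - i)\<bar> \<le> K"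
      using a_nonneg[of i] a_nonneg[of "N - 1 - i"] a_bound[of i] by auto
    have prod_bound: "\<bar>s i * t i\<bar> \<le> ((s i)\<^sup>2 + (t i)\<^sup>2) / 2"
      using sum_squares_bound[of "\<bar>s i\<bar>" "\<bar>t i\<bar>"] by (simp add: abs_mult)
    have "(a i - a (N - 1 - i)) * (s i * t i) \<le> \<bar>a i - a (N - 1 - i)\<bar> * \<bar>s i * t i\<bar>"
      by (metis abs_ge_self abs_mult)
    also have "\<dots> \<le> K * \<bar>s i * t i\<bar>"
      using diff_bound by (rule mult_right_mono) simp
    also have "\<dots> \<le> K * (((s i)\<^sup>2 + (t i)\<^sup>2) / 2)"
      using prod_bound diff_bound by (intro mult_left_mono) auto
    finally show "(a i - a (N - 1 - i)) * (s i * t i) \<le> K / 2 * ((s i)\<^sup>2 + (t i)\<^sup>2)"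
      by simp
  qed
  finally show ?thesis
    by (simp add: sum_distrib_left)
qed

lemma mat_inner_complete_bip_le:
  fixes v :: "nat \<Rightarrow> nat \<Rightarrow> real" and a :: "nat \<Rightarrow> real"
  assumes orthonormal: "\<And>i k. i < m + n \<Longrightarrow> k < m + n \<Longrightarrow>
          (\<Sum>j<m + n. v i j * v k j) = (if i = k then 1 else 0)"
    and signrel: "\<And>i j. i < m + n \<Longrightarrow> j < m + n \<Longrightarrow> v i j = sgnf m j * v (m + n - 1 - i) j"
    and a_nonneg: "\<And>i. i < m + n \<Longrightarrow> 0 \<le> a i"
    and a_bound: "\<And>i. i < m + n \<Longrightarrow> a i + a (m + n - 1 - i) \<le> K"
  shows "mat_inner (m + n) (\<lambda>j k. \<Sum>i<m + n. a i * v i j * v i k) (complete_bip m n)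
           \<le> K / 2 * (m + n)"
proof -
  define s where "s i = (\<Sum>j<m. v i j)" for i
  define t where "t i = (\<Sum>j=m..<m+n. v i j)" for i
  have reflect: "v (m + n - 1 - i) j = sgnf m j * v i j" if "i < m + n" "j < m + n" for i j
    using signrel[of "m + n - 1 - i" j] that by simp
  have s_reflect: "s (m + n - 1 - i) = s i" if "i < m + n" for i
    unfolding s_def using reflect[OF that] by (simp add: sgnf_def)
  have t_reflect: "t (m + n - 1 - i) = - t i" if "i < m + n" for i
    unfolding t_def using reflect[OF that] by (simp add: sgnf_def sum_negf[symmetric])
  have "mat_inner (m + n) (\<lambda>j k. \<Sum>i<m + n. a i * v i j * v i k) (complete_bip m n)
      = (\<Sum>i<m + n. a i * (2 * s i * t i))"
    unfolding mat_inner_sum_rank_one quad_form_complete_bip s_def t_def ..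
  also have "\<dots> \<le> K / 2 * (\<Sum>i<m + n. (s i)\<^sup>2 + (t i)\<^sup>2)"
    using s_reflect t_reflect a_nonneg a_bound by (rule sum_reflected_products_le)
  also have "\<dots> \<le> K / 2 * (m + n)"
  proof (cases "m + n = 0")
    \<comment> \<open>for m + n = 0 nothing forces K \<ge> 0, but then both sides vanish\<close>
    case False
    have "0 \<le> K"
      using a_bound[of 0] a_nonneg[of 0] a_nonneg[of "m + n - 1"] False by simp
    moreover have "(\<Sum>i<m + n. (s i)\<^sup>2) \<le> card {..<m}"
      unfolding s_def
      by (rule orthonormal_sum_block_sq_le_card[where J = "{..<m + n}"]) (use orthonormal in auto)
    moreover have "(\<Sum>i<m + n. (t i)\<^sup>2) \<le> card {m..<m + n}"
      unfolding t_def
      by (rule orthonormal_sum_block_sq_le_card[where J = "{..<m + n}"]) (use orthonormal in auto)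
    ultimately show ?thesis
      by (simp add: sum.distrib mult_left_mono)
  qed simp
  finally show ?thesis .
qed

theorem lemma3p1:
  fixes m n N :: nat
    and M :: "nat \<Rightarrow> nat \<Rightarrow> real"
    and lam :: "nat \<Rightarrow> real"
    and v :: "nat \<Rightarrow> nat \<Rightarrow> real"
    and a :: "nat \<Rightarrow> real"
    and X :: "nat \<Rightarrow> nat \<Rightarrow> real"
  assumes M01: "zero_one_matrix m n M"
    and N_def: "N = m + n"
    and sorted: "\<And>i k. i \<le> k \<Longrightarrow> k < N \<Longrightarrow> lam k \<le> lam i"
    and orthonormal: "\<And>i k. i < N \<Longrightarrow> k < N \<Longrightarrow>
          (\<Sum>j<N. v i j * v k j) = (if i = k then 1 else 0)"
    and eigen: "\<And>i j. i < N \<Longrightarrow> j < N \<Longrightarrow>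
          (\<Sum>k<N. symmetrization m n M j k * v i k) = lam i * v i j"
    and signrel: "\<And>i j. i < N \<Longrightarrow> j < N \<Longrightarrow> v i j = sgnf m j * v (N - 1 - i) j"
    and a_nonneg: "\<And>i. i < N \<Longrightarrow> a i \<ge> 0"
    and X_def: "X = (\<lambda>j k. \<Sum>i<N. a i * v i j * v i k)"
  shows "disc m n M X \<ge> (\<Sum>i<N. a i * lam i)
           - density m n M * real N / 2 * Max {a i + a (N - 1 - i) | i. i < N}"
proof -
  define K where "K = Max {a i + a (N - 1 - i) | i. i < N}"
  have K_bound: "a i + a (N - 1 - i) \<le> K" if "i < N" for i
    unfolding K_def using that by (intro Max_ge) auto
  have "quad_form N (symmetrization m n M) (v i) = lam i" if "i < N" for i
    by (rule quad_form_eigenvector) (use that eigen orthonormal[of i i] in auto)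
  then have eigen_part: "mat_inner N X (symmetrization m n M) = (\<Sum>i<N. a i * lam i)"
    unfolding X_def mat_inner_sum_rank_one by simp
  have "mat_inner N X (complete_bip m n) \<le> K / 2 * N"
    unfolding X_def using orthonormal signrel a_nonneg K_bound
    by (rule mat_inner_complete_bip_le[of m n, folded N_def])
  then have "density m n M * mat_inner N X (complete_bip m n) \<le> density m n M * (K / 2 * N)"
    by (rule mult_left_mono) (simp add: density_def)
  with eigen_part show ?thesis
    unfolding disc_def N_def[symmetric] K_def[symmetric] by (simp add: mult_ac)
qed

end
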